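(* Let $\theta\mapsto P_\theta$ ($\theta$ in an open subset of $\mathbb{R}$) be a family of regular $X\times X$ transition matrices, differentiable in $\theta$, with stationary distribution $\pi_\theta$ and Dobrushin coefficient $\rho<1$. Suppose $\nabla_\theta (P_\theta)_{ij}=g_{i}\bigl(\dot P_{ij}-\ddot P_{ij}\bigr)$ for all $i,j$, where $\dot P,\ddot P$ are transition matrices and $g_1,\dots,g_X$ are real constants. Fix $c\in\mathbb{R}^X$, an initial distribution $\pi_0$, and integers $m\ge1$, $N\ge0$. Simulate $x_0\sim\pi_0$ and $x_1,\dots,x_{m-1}$ with transition matrix $P_\theta$; then, given $x_{m-1}$, draw $\dot x_m\sim\dot P_{x_{m-1},\cdot}$ and $\ddot x_m\sim\ddot P_{x_{m-1},\cdot}$; then propagate $\dot x_{m+1},\dots,\dot x_{m+N}$ and $\ddot x_{m+1},\dots,\ddot x_{m+N}$ each as Markov chains with transition matrix $P_\theta$ (with an arbitrary joint coupling between the two chains). Define $\widehat G_{m,N}=g_{x_{m-1}}\sum_{k=m}^{m+N}\bigl(c(\dot x_k)-c(\ddot x_k)\bigr)$. Then there exist constants $K_1,K_2$ independent of $m,N,\pi_0$ such that $$\bigl|\mathbb{E}\{\widehat G_{m,N}\}-\nabla_\theta(c'\pi_\theta)\bigr|\le K_1\rho^m\,d_V(\pi_0,\pi_\theta)+K_2\rho^N .$$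
   Context: A transition matrix is regular if some power has all entries strictly positive. The Dobrushin coefficient of $P$ is $\rho=\frac12\max_{i,j}\sum_l|P_{il}-P_{jl}|$. The variational distance is $d_V(\pi,\bar\pi)=\frac12\sum_i|\pi(i)-\bar\pi(i)|$. *)

theory Defs
  imports "HOL-Probability.Probability"
begin

definition mmult :: "('x::finite \<Rightarrow> 'x \<Rightarrow> real) \<Rightarrow> ('x \<Rightarrow> 'x \<Rightarrow> real) \<Rightarrow> 'x \<Rightarrow> 'x \<Rightarrow> real" where
  "mmult A B = (\<lambda>i j. \<Sum>l\<in>UNIV. A i l * B l j)"

fun mpow :: "('x::finite \<Rightarrow> 'x \<Rightarrow> real) \<Rightarrow> nat \<Rightarrow> 'x \<Rightarrow> 'x \<Rightarrow> real" where
  "mpow A 0 = (\<lambda>i j. if i = j then 1 else 0)"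
| "mpow A (Suc n) = mmult (mpow A n) A"

definition prob_vector :: "('x::finite \<Rightarrow> real) \<Rightarrow> bool" where
  "prob_vector p \<longleftrightarrow> (\<forall>i. 0 \<le> p i) \<and> (\<Sum>i\<in>UNIV. p i) = 1"

definition stochastic :: "('x::finite \<Rightarrow> 'x \<Rightarrow> real) \<Rightarrow> bool" where
  "stochastic P \<longleftrightarrow> (\<forall>i. prob_vector (P i))"

definition regular :: "('x::finite \<Rightarrow> 'x \<Rightarrow> real) \<Rightarrow> bool" where
  "regular P \<longleftrightarrow> (\<exists>n. \<forall>i j. 0 < mpow P n i j)"

definition stationary :: "('x::finite \<Rightarrow> 'x \<Rightarrow> real) \<Rightarrow> ('x \<Rightarrow> real) \<Rightarrow> bool" where
  "stationary P p \<longleftrightarrow> prob_vector p \<and> (\<forall>j. (\<Sum>i\<in>UNIV. p i * P i j) = p j)"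

definition dobrushin :: "('x::finite \<Rightarrow> 'x \<Rightarrow> real) \<Rightarrow> real" where
  "dobrushin P = (1/2) * Max ((\<lambda>(i,j). \<Sum>l\<in>UNIV. \<bar>P i l - P j l\<bar>) ` UNIV)"

definition var_dist :: "('x::finite \<Rightarrow> real) \<Rightarrow> ('x \<Rightarrow> real) \<Rightarrow> real" where
  "var_dist p q = (1/2) * (\<Sum>i\<in>UNIV. \<bar>p i - q i\<bar>)"

end

theory Submission
  imports Defs
begin

text \<open>
  Let \<rho> be the Dobrushin coefficient of P \<theta>; P and \<pi> without argument stand for P \<theta> and \<pi> \<theta>.
  On vectors of total mass zero, v \<mapsto> v P contracts the l1-norm by the factor \<rho>. Hence h j = \<Sum>n. (e_j - \<pi>) P^n c converges
  and solves the Poisson equation P h = h - c + \<pi> c. With it,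
  c'\<pi> t - c'\<pi> \<theta> = \<pi> t (P t - P \<theta>) h, and \<pi> t \<rightarrow> \<pi> \<theta> because
  |\<pi> t - \<pi> \<theta>|_1 \<le> |P t - P \<theta>| / (1 - \<rho>); so the gradient is \<pi> T with T i = g i (Pd i - Pdd i) h.

  Summing over sample paths, the mean of the estimator is \<mu> S, where \<mu> = \<pi>0 P^(m-1) and
  S i = g i \<Sum>n\<le>N. d_i P^n c with d_i = (Pd i - Pdd i). The Poisson equation telescopes S i to
  T i - R i with R i = g i d_i P^(N+1) h, so the bias is (\<pi>0 - \<pi>) P^(m-1) T - \<mu> R. Both terms
  push zero-mass vectors through powers of P, and contraction bounds them by multiples of
  \<rho>^(m-1) d_V(\<pi>0, \<pi>) and \<rho>^(N+1).
\<close>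

definition vecmat :: "('x::finite \<Rightarrow> real) \<Rightarrow> ('x \<Rightarrow> 'x \<Rightarrow> real) \<Rightarrow> 'x \<Rightarrow> real" where
  "vecmat v A = (\<lambda>j. \<Sum>i\<in>UNIV. v i * A i j)"

definition matvec :: "('x::finite \<Rightarrow> 'x \<Rightarrow> real) \<Rightarrow> ('x \<Rightarrow> real) \<Rightarrow> 'x \<Rightarrow> real" where
  "matvec A f = (\<lambda>i. \<Sum>j\<in>UNIV. A i j * f j)"

fun vecmat_pow :: "('x::finite \<Rightarrow> real) \<Rightarrow> ('x \<Rightarrow> 'x \<Rightarrow> real) \<Rightarrow> nat \<Rightarrow> 'x \<Rightarrow> real" where
  "vecmat_pow v A 0 = v"
| "vecmat_pow v A (Suc n) = vecmat (vecmat_pow v A n) A"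

definition dot :: "('x::finite \<Rightarrow> real) \<Rightarrow> ('x \<Rightarrow> real) \<Rightarrow> real" where
  "dot v f = (\<Sum>i\<in>UNIV. v i * f i)"

definition norm1 :: "('x::finite \<Rightarrow> real) \<Rightarrow> real" where
  "norm1 v = (\<Sum>i\<in>UNIV. \<bar>v i\<bar>)"

lemma norm1_nonneg: "0 \<le> norm1 v"
  unfolding norm1_def by (simp add: sum_nonneg)

lemma abs_le_norm1: "\<bar>v i\<bar> \<le> norm1 v"
  unfolding norm1_def by (rule member_le_sum[where f = "\<lambda>i. \<bar>v i\<bar>"]) auto

lemma norm1_prob_vector: "prob_vector p \<Longrightarrow> norm1 p = 1"
  unfolding prob_vector_def norm1_def by simp

lemma norm1_diff_le: "norm1 (\<lambda>i. v i - w i) \<le> norm1 v + norm1 w"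
  unfolding norm1_def by (simp add: sum.distrib[symmetric] sum_mono abs_triangle_ineq4)

lemma abs_dot_le: "\<bar>dot v f\<bar> \<le> norm1 v * norm1 f"
proof -
  have "\<bar>dot v f\<bar> \<le> (\<Sum>i\<in>UNIV. \<bar>v i\<bar> * \<bar>f i\<bar>)"
    unfolding dot_def by (rule order_trans[OF sum_abs]) (simp add: abs_mult)
  also have "\<dots> \<le> (\<Sum>i\<in>UNIV. \<bar>v i\<bar> * norm1 f)"
    by (intro sum_mono mult_left_mono abs_le_norm1) simp
  finally show ?thesis by (simp add: norm1_def sum_distrib_right)
qed

lemma dot_diff_left: "dot (\<lambda>i. v i - w i) f = dot v f - dot w f"
  unfolding dot_def by (simp add: left_diff_distrib sum_subtractf)

lemma dot_sum_left: "dot (\<lambda>j. \<Sum>l\<in>L. a l * V l j) f = (\<Sum>l\<in>L. a l * dot (V l) f)"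
  unfolding dot_def by (simp add: sum_distrib_left sum_distrib_right mult_ac) (rule sum.swap)

lemma dot_vecmat: "dot (vecmat v A) f = dot v (matvec A f)"
  unfolding dot_def vecmat_def matvec_def
  by (simp add: sum_distrib_left sum_distrib_right mult_ac) (rule sum.swap)

lemma sum_vecmat: "stochastic A \<Longrightarrow> (\<Sum>j\<in>UNIV. vecmat v A j) = (\<Sum>i\<in>UNIV. v i)"
  unfolding vecmat_def stochastic_def prob_vector_def
  by (subst sum.swap) (simp add: sum_distrib_left[symmetric])

lemma sum_vecmat_pow: "stochastic A \<Longrightarrow> (\<Sum>j\<in>UNIV. vecmat_pow v A n j) = (\<Sum>i\<in>UNIV. v i)"
  by (induction n) (simp_all add: sum_vecmat)

lemma vecmat_pow_diff: "vecmat_pow (\<lambda>i. v i - w i) A n = (\<lambda>j. vecmat_pow v A n j - vecmat_pow w A n j)"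
  by (induction n) (simp_all add: vecmat_def left_diff_distrib sum_subtractf)

lemma vecmat_pow_sum:
  "vecmat_pow (\<lambda>j. \<Sum>l\<in>L. a l * V l j) A n = (\<lambda>j. \<Sum>l\<in>L. a l * vecmat_pow (V l) A n j)"
proof (induction n)
  case (Suc n)
  show ?case
    by (simp add: Suc vecmat_def sum_distrib_left sum_distrib_right mult_ac fun_eq_iff sum.swap[of _ L])
qed simp

lemma vecmat_pow_Suc': "vecmat_pow (vecmat v A) A n = vecmat_pow v A (Suc n)"
  by (induction n) simp_all

lemma vecmat_pow_stationary: "stationary A p \<Longrightarrow> vecmat_pow p A n = p"
  by (induction n) (auto simp: stationary_def vecmat_def)

lemma prob_vector_vecmat_pow:
  assumes "stochastic A" "prob_vector v"
  shows "prob_vector (vecmat_pow v A n)"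
proof (induction n)
  case (Suc n)
  then have "0 \<le> vecmat (vecmat_pow v A n) A j" for j
    using assms(1) unfolding prob_vector_def stochastic_def vecmat_def
    by (auto intro!: sum_nonneg)
  with Suc show ?case
    using sum_vecmat[OF assms(1)] unfolding prob_vector_def by simp
qed (use assms in simp)

lemma row_dist_le_dobrushin: "(\<Sum>l\<in>UNIV. \<bar>A i l - A j l\<bar>) \<le> 2 * dobrushin A"
proof -
  have "(\<Sum>l\<in>UNIV. \<bar>A i l - A j l\<bar>) \<le> Max ((\<lambda>(i, j). \<Sum>l\<in>UNIV. \<bar>A i l - A j l\<bar>) ` UNIV)"
    by (rule Max_ge) (auto intro!: image_eqI[where x = "(i, j)"])
  then show ?thesis unfolding dobrushin_def by simp
qed

lemma dobrushin_nonneg: "0 \<le> dobrushin (A :: 'x::finite \<Rightarrow> 'x \<Rightarrow> real)"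
  using row_dist_le_dobrushin[of A undefined undefined] by simp

lemma vecmat_balanced_split:
  assumes v_eq: "\<And>i. v i = vp i - vn i" and balanced: "(\<Sum>j\<in>UNIV. vn j) = (\<Sum>i\<in>UNIV. vp i)"
  shows "(\<Sum>i\<in>UNIV. vp i) * vecmat v A l = (\<Sum>i\<in>UNIV. \<Sum>j\<in>UNIV. vp i * vn j * (A i l - A j l))"
proof -
  have "(\<Sum>i\<in>UNIV. \<Sum>j\<in>UNIV. vp i * vn j * (A i l - A j l))
      = (\<Sum>i\<in>UNIV. vp i * A i l * (\<Sum>j\<in>UNIV. vn j))
        - (\<Sum>j\<in>UNIV. vn j * A j l * (\<Sum>i\<in>UNIV. vp i))"
    by (simp add: right_diff_distrib sum_subtractf sum_distrib_left sum_distrib_right mult_ac)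
      (subst sum.swap, rule refl)
  also have "\<dots> = (\<Sum>i\<in>UNIV. vp i) * (\<Sum>i\<in>UNIV. (vp i - vn i) * A i l)"
    unfolding balanced sum_distrib_right[symmetric] by (simp add: left_diff_distrib sum_subtractf algebra_simps)
  finally show ?thesis
    by (simp add: vecmat_def v_eq)
qed

lemma norm1_vecmat_le:
  fixes v :: "'x::finite \<Rightarrow> real"
  assumes zero_sum: "(\<Sum>i\<in>UNIV. v i) = 0"
  shows "norm1 (vecmat v A) \<le> dobrushin A * norm1 v"
proof -
  define vp vn where "vp = (\<lambda>i. max (v i) 0)" and "vn = (\<lambda>i. max (- v i) 0)"
  define s where "s = (\<Sum>i\<in>UNIV. vp i)"
  have vp_nonneg: "0 \<le> vp i" and vn_nonneg: "0 \<le> vn i" for i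
    by (simp_all add: vp_def vn_def)
  have v_eq: "v i = vp i - vn i" for i
    by (auto simp: vp_def vn_def)
  then have neg: "(\<Sum>j\<in>UNIV. vn j) = s"
    using zero_sum by (simp add: s_def sum_subtractf)
  have norm1_v: "norm1 v = 2 * s"
  proof -
    have "\<bar>v i\<bar> = vp i + vn i" for i
      by (auto simp: vp_def vn_def)
    then show ?thesis by (simp add: norm1_def sum.distrib neg s_def)
  qed
  have s_nonneg: "0 \<le> s"
    by (simp add: s_def sum_nonneg vp_nonneg)
  have "s * norm1 (vecmat v A) = (\<Sum>l\<in>UNIV. \<bar>s * vecmat v A l\<bar>)"
    by (simp add: norm1_def sum_distrib_left abs_mult s_nonneg)
  also have "\<dots> = (\<Sum>l\<in>UNIV. \<bar>\<Sum>i\<in>UNIV. \<Sum>j\<in>UNIV. vp i * vn j * (A i l - A j l)\<bar>)"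
    using vecmat_balanced_split[OF v_eq neg[unfolded s_def], of A] by (simp add: s_def)
  also have "\<dots> \<le> (\<Sum>l\<in>UNIV. \<Sum>i\<in>UNIV. \<Sum>j\<in>UNIV. vp i * vn j * \<bar>A i l - A j l\<bar>)"
    by (intro sum_mono order_trans[OF sum_abs]) (simp add: abs_mult vp_nonneg vn_nonneg)
  also have "\<dots> = (\<Sum>i\<in>UNIV. \<Sum>j\<in>UNIV. vp i * vn j * (\<Sum>l\<in>UNIV. \<bar>A i l - A j l\<bar>))"
    by (simp add: sum_distrib_left) (subst sum.swap, rule sum.cong[OF refl], rule sum.swap)
  also have "\<dots> \<le> (\<Sum>i\<in>UNIV. \<Sum>j\<in>UNIV. vp i * vn j * (2 * dobrushin A))"
    by (intro sum_mono mult_left_mono row_dist_le_dobrushin) (simp add: vp_nonneg vn_nonneg)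
  also have "\<dots> = (\<Sum>i\<in>UNIV. vp i) * (\<Sum>j\<in>UNIV. vn j) * (2 * dobrushin A)"
    by (simp add: sum_distrib_left sum_distrib_right mult_ac)
  also have "\<dots> = s * (dobrushin A * norm1 v)"
    by (simp add: norm1_v neg s_def)
  finally have "s * norm1 (vecmat v A) \<le> s * (dobrushin A * norm1 v)" .
  moreover have "s = 0 \<Longrightarrow> v = (\<lambda>_. 0)"
    using norm1_v by (simp add: norm1_def sum_nonneg_eq_0_iff fun_eq_iff)
  ultimately show ?thesis
    using s_nonneg by (cases "s = 0") (simp_all add: vecmat_def norm1_def)
qed

lemma norm1_vecmat_pow_le:
  assumes "stochastic A" "(\<Sum>i\<in>UNIV. v i) = 0"
  shows "norm1 (vecmat_pow v A n) \<le> dobrushin A ^ n * norm1 v"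
proof (induction n)
  case (Suc n)
  have "norm1 (vecmat_pow v A (Suc n)) \<le> dobrushin A * norm1 (vecmat_pow v A n)"
    using norm1_vecmat_le[of "vecmat_pow v A n" A] sum_vecmat_pow[OF assms(1)] assms(2) by simp
  also have "\<dots> \<le> dobrushin A * (dobrushin A ^ n * norm1 v)"
    using Suc dobrushin_nonneg by (rule mult_left_mono)
  finally show ?case by simp
qed simp

lemma summable_dot_vecmat_pow:
  assumes st: "stochastic A" and contr: "dobrushin A < 1" and zero_sum: "(\<Sum>i\<in>UNIV. v i) = 0"
  shows "summable (\<lambda>n. dot (vecmat_pow v A n) f)"
proof (rule summable_comparison_test)
  show "\<exists>N. \<forall>n\<ge>N. norm (dot (vecmat_pow v A n) f) \<le> dobrushin A ^ n * (norm1 v * norm1 f)"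
  proof (intro exI allI impI)
    fix n
    have "\<bar>dot (vecmat_pow v A n) f\<bar> \<le> norm1 (vecmat_pow v A n) * norm1 f"
      by (rule abs_dot_le)
    also have "\<dots> \<le> dobrushin A ^ n * norm1 v * norm1 f"
      by (intro mult_right_mono norm1_vecmat_pow_le[OF st zero_sum] norm1_nonneg)
    finally show "norm (dot (vecmat_pow v A n) f) \<le> dobrushin A ^ n * (norm1 v * norm1 f)"
      by (simp add: mult.assoc)
  qed
  show "summable (\<lambda>n. dobrushin A ^ n * (norm1 v * norm1 f))"
    using contr dobrushin_nonneg[of A] by (intro summable_mult2 summable_geometric) simp
qed

lemma poisson_equation_solvable:
  fixes A :: "'x::finite \<Rightarrow> 'x \<Rightarrow> real"
  assumes st: "stochastic A" and sta: "stationary A p" and contr: "dobrushin A < 1"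
  shows "\<exists>h. matvec A h = (\<lambda>j. h j - c j + dot p c)"
proof -
  define e :: "'x \<Rightarrow> 'x \<Rightarrow> real" where "e j = (\<lambda>l. (if l = j then 1 else 0) - p l)" for j
  define t where "t j n = dot (vecmat_pow (e j) A n) c" for j n
  have rows: "(\<Sum>l\<in>UNIV. A j l) = 1" for j
    using st by (simp add: stochastic_def prob_vector_def)
  have e_zero_sum: "(\<Sum>l\<in>UNIV. e j l) = 0" for j
    using sta by (simp add: e_def stationary_def prob_vector_def sum_subtractf)
  have summable: "summable (t j)" for j
    unfolding t_def by (rule summable_dot_vecmat_pow[OF st contr e_zero_sum])
  have t_Suc: "(\<Sum>l\<in>UNIV. A j l * t l n) = t j (Suc n)" for j n
  proof -
    have "(\<Sum>l\<in>UNIV. A j l * e l k) = A j k - p k" for k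
      using rows[of j] by (simp add: e_def right_diff_distrib sum_subtractf
          sum_distrib_right[symmetric] if_distrib[of "\<lambda>x. _ * x"] cong: if_cong)
    moreover have "vecmat (e j) A k = A j k - p k" for k
      using sta by (simp add: e_def vecmat_def stationary_def left_diff_distrib sum_subtractf
          if_distrib[of "\<lambda>x. x * _"] cong: if_cong)
    ultimately have "(\<lambda>k. \<Sum>l\<in>UNIV. A j l * e l k) = vecmat (e j) A"
      by auto
    then show ?thesis
      unfolding t_def dot_sum_left[symmetric] vecmat_pow_sum[symmetric]
      by (simp add: vecmat_pow_Suc')
  qed
  define h where "h j = (\<Sum>n. t j n)" for j
  have "matvec A h j = h j - t j 0" for j
  proof -
    have "matvec A h j = (\<Sum>l\<in>UNIV. \<Sum>n. A j l * t l n)"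
      unfolding matvec_def h_def by (simp add: suminf_mult summable)
    also have "\<dots> = (\<Sum>n. \<Sum>l\<in>UNIV. A j l * t l n)"
      by (rule suminf_sum[symmetric]) (simp add: summable_mult summable)
    also have "\<dots> = h j - t j 0"
      unfolding t_Suc h_def by (rule suminf_split_head[OF summable])
    finally show ?thesis .
  qed
  moreover have "t j 0 = c j - dot p c" for j
    by (simp add: t_def e_def dot_def left_diff_distrib sum_subtractf if_distrib[of "\<lambda>x. x * _"] cong: if_cong)
  ultimately have "matvec A h = (\<lambda>j. h j - c j + dot p c)"
    by (simp add: fun_eq_iff)
  then show ?thesis by blast
qed

lemma norm1_stationary_diff_le:
  assumes sta_A: "stationary A p" and sta_B: "stationary B q" and contr: "dobrushin A < 1"
  shows "norm1 (\<lambda>i. q i - p i) \<le> (\<Sum>i\<in>UNIV. \<Sum>j\<in>UNIV. \<bar>B i j - A i j\<bar>) / (1 - dobrushin A)"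
proof -
  define \<delta> where "\<delta> i = q i - p i" for i
  define w where "w j = (\<Sum>i\<in>UNIV. q i * (B i j - A i j))" for j
  have q_bounds: "0 \<le> q i" "q i \<le> 1" for i
    using sta_B member_le_sum[of i UNIV q]
    by (auto simp: stationary_def prob_vector_def sum_nonneg)
  have "(\<Sum>i\<in>UNIV. \<delta> i) = 0"
    using sta_A sta_B by (simp add: \<delta>_def stationary_def prob_vector_def sum_subtractf)
  note contraction = norm1_vecmat_le[OF this, of A]
  have \<delta>_eq: "\<delta> j = w j + vecmat \<delta> A j" for j
    using sta_A sta_B
    by (simp add: \<delta>_def w_def vecmat_def stationary_def right_diff_distrib left_diff_distrib sum_subtractf)
  have "norm1 w \<le> (\<Sum>j\<in>UNIV. \<Sum>i\<in>UNIV. \<bar>B i j - A i j\<bar>)"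
    unfolding norm1_def w_def
    by (intro sum_mono order_trans[OF sum_abs])
      (simp add: abs_mult q_bounds mult_left_le_one_le)
  then have "norm1 w \<le> (\<Sum>i\<in>UNIV. \<Sum>j\<in>UNIV. \<bar>B i j - A i j\<bar>)"
    by (subst (asm) sum.swap)
  moreover have "norm1 \<delta> \<le> norm1 w + dobrushin A * norm1 \<delta>"
  proof -
    have "norm1 \<delta> \<le> norm1 w + norm1 (vecmat \<delta> A)"
      unfolding norm1_def by (subst \<delta>_eq) (simp add: sum.distrib[symmetric] sum_mono abs_triangle_ineq)
    with contraction show ?thesis by linarith
  qed
  ultimately show ?thesis
    using contr by (simp add: \<delta>_def[symmetric] field_simps)
qed

lemma tendsto_stationary:
  assumes sta: "\<forall>\<^sub>F t in F. stationary (P t) (\<pi> t)" and sta_A: "stationary A p"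
    and contr: "dobrushin A < 1" and lim: "\<And>i j. ((\<lambda>t. P t i j) \<longlongrightarrow> A i j) F"
  shows "((\<lambda>t. \<pi> t i) \<longlongrightarrow> p i) F"
proof -
  define W where "W t = (\<Sum>i\<in>UNIV. \<Sum>j\<in>UNIV. \<bar>P t i j - A i j\<bar>) / (1 - dobrushin A)" for t
  have "((\<lambda>t. \<pi> t i - p i) \<longlongrightarrow> 0) F"
  proof (rule Lim_null_comparison)
    show "\<forall>\<^sub>F t in F. norm (\<pi> t i - p i) \<le> W t"
      using sta
    proof eventually_elim
      case (elim t)
      then show ?case
        using abs_le_norm1[of "\<lambda>i. \<pi> t i - p i" i] norm1_stationary_diff_le[OF sta_A elim contr]
        by (simp add: W_def)
    qed
    have "((\<lambda>t. \<Sum>i\<in>UNIV. \<Sum>j\<in>UNIV. \<bar>P t i j - A i j\<bar>) \<longlongrightarrow> (\<Sum>i\<in>UNIV. \<Sum>j\<in>UNIV. \<bar>A i j - A i j\<bar>)) F"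
      by (intro tendsto_intros lim)
    then show "(W \<longlongrightarrow> 0) F"
      unfolding W_def by (intro tendsto_divide_zero) simp
  qed
  then show ?thesis
    by (rule LIM_zero_cancel)
qed

lemma dot_stationary_diff:
  assumes sta_A: "stationary A p" and sta_B: "stationary B q"
    and poisson: "matvec A h = (\<lambda>j. h j - c j + dot p c)"
  shows "dot q c - dot p c = dot q (matvec (\<lambda>i j. B i j - A i j) h)"
proof -
  have q_sum: "(\<Sum>i\<in>UNIV. q i) = 1" and q_inv: "vecmat q B = q"
    using sta_B by (auto simp: stationary_def prob_vector_def vecmat_def)
  have "dot q (matvec A h) = dot q h - dot q c + dot p c"
    unfolding poisson dot_def
    by (simp add: algebra_simps sum.distrib sum_subtractf sum_distrib_right[symmetric] q_sum)
  moreover have "dot q (matvec B h) = dot q h"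
    by (simp add: dot_vecmat[symmetric] q_inv)
  ultimately show ?thesis
    by (simp add: dot_def matvec_def algebra_simps sum_subtractf sum.distrib)
qed

lemma stationary_functional_has_derivative:
  fixes P :: "real \<Rightarrow> 'x::finite \<Rightarrow> 'x \<Rightarrow> real"
  assumes sta: "\<forall>\<^sub>F t in at \<theta>. stationary (P t) (\<pi> t)"
    and sta_\<theta>: "stationary (P \<theta>) (\<pi> \<theta>)"
    and contr: "dobrushin (P \<theta>) < 1"
    and deriv: "\<And>i j. ((\<lambda>t. P t i j) has_real_derivative P' i j) (at \<theta>)"
    and poisson: "matvec (P \<theta>) h = (\<lambda>j. h j - c j + dot (\<pi> \<theta>) c)"
  shows "((\<lambda>t. \<Sum>i\<in>UNIV. c i * \<pi> t i) has_real_derivative dot (\<pi> \<theta>) (matvec P' h)) (at \<theta>)"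
proof -
  have "((\<lambda>t. P t i j) \<longlongrightarrow> P \<theta> i j) (at \<theta>)" for i j
    using DERIV_isCont[OF deriv] by (simp add: isCont_def)
  then have \<pi>_lim: "((\<lambda>t. \<pi> t i) \<longlongrightarrow> \<pi> \<theta> i) (at \<theta>)" for i
    by (rule tendsto_stationary[OF sta sta_\<theta> contr])
  have quotient: "\<forall>\<^sub>F t in at \<theta>. dot (\<pi> t) (matvec (\<lambda>i j. (P t i j - P \<theta> i j) / (t - \<theta>)) h)
      = (dot (\<pi> t) c - dot (\<pi> \<theta>) c) / (t - \<theta>)"
    using sta
  proof eventually_elim
    case (elim t)
    have "dot (\<pi> t) (matvec (\<lambda>i j. (P t i j - P \<theta> i j) / (t - \<theta>)) h)
        = dot (\<pi> t) (matvec (\<lambda>i j. P t i j - P \<theta> i j) h) / (t - \<theta>)"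
      by (simp add: dot_def matvec_def sum_divide_distrib sum_distrib_left)
    then show ?case
      by (simp add: dot_stationary_diff[OF sta_\<theta> elim poisson])
  qed
  have "((\<lambda>t. dot (\<pi> t) (matvec (\<lambda>i j. (P t i j - P \<theta> i j) / (t - \<theta>)) h))
      \<longlongrightarrow> dot (\<pi> \<theta>) (matvec P' h)) (at \<theta>)"
    using deriv unfolding dot_def matvec_def has_field_derivative_iff
    by (intro tendsto_intros \<pi>_lim)
  then have "((\<lambda>t. (dot (\<pi> t) c - dot (\<pi> \<theta>) c) / (t - \<theta>))
      \<longlongrightarrow> dot (\<pi> \<theta>) (matvec P' h)) (at \<theta>)"
    using quotient by (rule Lim_transform_eventually)
  then show ?thesis
    by (simp add: has_field_derivative_iff dot_def mult.commute)
qed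

definition path_weight ::
    "('x \<Rightarrow> real) \<Rightarrow> ('x \<Rightarrow> 'x \<Rightarrow> real) \<Rightarrow> nat \<Rightarrow> nat \<Rightarrow> (nat \<Rightarrow> 'x) \<Rightarrow> real" where
  "path_weight v A m n b = v (b m) * (\<Prod>k\<in>{m..<m + n}. A (b k) (b (Suc k)))"

lemma sum_PiE_insert:
  assumes "x \<notin> S"
  shows "(\<Sum>b\<in>Pi\<^sub>E (insert x S) T. f b) = (\<Sum>y\<in>T x. \<Sum>g\<in>Pi\<^sub>E S T. f (g(x := y)))"
proof -
  have "(\<Sum>b\<in>Pi\<^sub>E (insert x S) T. f b) = (\<Sum>(y, g)\<in>T x \<times> Pi\<^sub>E S T. f (g(x := y)))"
    unfolding PiE_insert_eq by (subst sum.reindex[OF inj_combinator[OF assms]]) (simp add: case_prod_unfold)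
  then show ?thesis
    by (simp add: sum.cartesian_product)
qed

lemma sum_paths_Suc:
  "(\<Sum>b\<in>Pi\<^sub>E {m..m + Suc n} (\<lambda>_. UNIV). path_weight v A m (Suc n) b * G b)
   = (\<Sum>b\<in>Pi\<^sub>E {m..m + n} (\<lambda>_. UNIV).
        path_weight v A m n b * (\<Sum>y\<in>UNIV. A (b (m + n)) y * G (b(m + Suc n := y))))"
proof -
  have "{m..m + Suc n} = insert (m + Suc n) {m..m + n}"
    by auto
  then have "(\<Sum>b\<in>Pi\<^sub>E {m..m + Suc n} (\<lambda>_. UNIV). path_weight v A m (Suc n) b * G b)
      = (\<Sum>y\<in>UNIV. \<Sum>b\<in>Pi\<^sub>E {m..m + n} (\<lambda>_. UNIV).
           path_weight v A m (Suc n) (b(m + Suc n := y)) * G (b(m + Suc n := y)))"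
    by (simp add: sum_PiE_insert)
  also have "\<dots> = (\<Sum>y\<in>UNIV. \<Sum>b\<in>Pi\<^sub>E {m..m + n} (\<lambda>_. UNIV).
      path_weight v A m n b * (A (b (m + n)) y * G (b(m + Suc n := y))))"
  proof (intro sum.cong refl)
    fix y and b :: "nat \<Rightarrow> 'a"
    have "(\<Prod>k\<in>{m..<m + n}. A ((b(m + Suc n := y)) k) ((b(m + Suc n := y)) (Suc k)))
        = (\<Prod>k\<in>{m..<m + n}. A (b k) (b (Suc k)))"
      by (rule prod.cong) auto
    then show "path_weight v A m (Suc n) (b(m + Suc n := y)) * G (b(m + Suc n := y))
        = path_weight v A m n b * (A (b (m + n)) y * G (b(m + Suc n := y)))"
      by (simp add: path_weight_def prod.op_ivl_Suc)
  qed
  finally show ?thesis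
    by (subst (asm) sum.swap) (simp add: sum_distrib_left)
qed

lemma sum_paths_endpoint:
  "(\<Sum>b\<in>Pi\<^sub>E {m..m + n} (\<lambda>_. UNIV). path_weight v A m n b * F (b (m + n)))
   = dot (vecmat_pow v A n) F"
proof (induction n arbitrary: F)
  case 0
  show ?case
    by (simp add: sum_PiE_insert path_weight_def dot_def)
next
  case (Suc n)
  have "(\<Sum>b\<in>Pi\<^sub>E {m..m + Suc n} (\<lambda>_. UNIV). path_weight v A m (Suc n) b * F (b (m + Suc n)))
      = (\<Sum>b\<in>Pi\<^sub>E {m..m + n} (\<lambda>_. UNIV). path_weight v A m n b * matvec A F (b (m + n)))"
    unfolding sum_paths_Suc by (simp add: matvec_def)
  also have "\<dots> = dot (vecmat_pow v A (Suc n)) F"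
    by (simp add: Suc.IH dot_vecmat)
  finally show ?case .
qed

lemma sum_paths_additive:
  assumes st: "stochastic A"
  shows "(\<Sum>b\<in>Pi\<^sub>E {m..m + n} (\<lambda>_. UNIV). path_weight v A m n b * (\<Sum>k\<in>{m..m + n}. c (b k)))
    = (\<Sum>k\<le>n. dot (vecmat_pow v A k) c)"
proof (induction n)
  case 0
  show ?case
    by (simp add: sum_PiE_insert path_weight_def dot_def)
next
  case (Suc n)
  have rows: "(\<Sum>y\<in>UNIV. A i y) = 1" for i
    using st by (simp add: stochastic_def prob_vector_def)
  have extend: "(\<Sum>y\<in>UNIV. A (b (m + n)) y * (\<Sum>k\<in>{m..m + Suc n}. c ((b(m + Suc n := y)) k)))
      = (\<Sum>k\<in>{m..m + n}. c (b k)) + matvec A c (b (m + n))" for b :: "nat \<Rightarrow> 'a"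
  proof -
    have "(\<Sum>k\<in>{m..m + Suc n}. c ((b(m + Suc n := y)) k)) = (\<Sum>k\<in>{m..m + n}. c (b k)) + c y" for y
      by (simp add: sum.cl_ivl_Suc)
    then show ?thesis
      by (simp add: matvec_def distrib_left sum.distrib sum_distrib_right[symmetric] rows)
  qed
  have "(\<Sum>b\<in>Pi\<^sub>E {m..m + Suc n} (\<lambda>_. UNIV). path_weight v A m (Suc n) b * (\<Sum>k\<in>{m..m + Suc n}. c (b k)))
      = (\<Sum>b\<in>Pi\<^sub>E {m..m + n} (\<lambda>_. UNIV). path_weight v A m n b * (\<Sum>k\<in>{m..m + n}. c (b k)))
        + (\<Sum>b\<in>Pi\<^sub>E {m..m + n} (\<lambda>_. UNIV). path_weight v A m n b * matvec A c (b (m + n)))"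
    unfolding sum_paths_Suc extend by (simp add: distrib_left sum.distrib)
  also have "\<dots> = (\<Sum>k\<le>Suc n. dot (vecmat_pow v A k) c)"
    by (simp add: Suc.IH sum_paths_endpoint dot_vecmat)
  finally show ?case .
qed

lemma expectation_cylinders:
  fixes M :: "'w pmf" and X Y :: "'w \<Rightarrow> nat \<Rightarrow> 'x::finite"
    and F :: "(nat \<Rightarrow> 'x) \<Rightarrow> (nat \<Rightarrow> 'x) \<Rightarrow> real"
  assumes "finite I" "finite J"
  shows "measure_pmf.expectation M (\<lambda>\<omega>. F (restrict (X \<omega>) I) (restrict (Y \<omega>) J))
    = (\<Sum>a\<in>Pi\<^sub>E I (\<lambda>_. UNIV). \<Sum>b\<in>Pi\<^sub>E J (\<lambda>_. UNIV).
         measure_pmf.prob M {\<omega>. (\<forall>k\<in>I. X \<omega> k = a k) \<and> (\<forall>k\<in>J. Y \<omega> k = b k)} * F a b)"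
proof -
  define \<phi> where "\<phi> \<omega> = (restrict (X \<omega>) I, restrict (Y \<omega>) J)" for \<omega>
  have range: "set_pmf (map_pmf \<phi> M) \<subseteq> Pi\<^sub>E I (\<lambda>_. UNIV) \<times> Pi\<^sub>E J (\<lambda>_. UNIV)"
    by (auto simp: \<phi>_def)
  have fibre: "\<phi> -` {(a, b)} = {\<omega>. (\<forall>k\<in>I. X \<omega> k = a k) \<and> (\<forall>k\<in>J. Y \<omega> k = b k)}"
    if "a \<in> Pi\<^sub>E I (\<lambda>_. UNIV)" "b \<in> Pi\<^sub>E J (\<lambda>_. UNIV)" for a b
    using that by (auto simp: \<phi>_def fun_eq_iff PiE_def extensional_def restrict_def) metis+
  have "measure_pmf.expectation M (\<lambda>\<omega>. F (restrict (X \<omega>) I) (restrict (Y \<omega>) J))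
      = measure_pmf.expectation (map_pmf \<phi> M) (case_prod F)"
    by (simp add: \<phi>_def)
  also have "\<dots> = (\<Sum>(a, b)\<in>Pi\<^sub>E I (\<lambda>_. UNIV) \<times> Pi\<^sub>E J (\<lambda>_. UNIV).
      pmf (map_pmf \<phi> M) (a, b) * F a b)"
    using assms range by (subst integral_measure_pmf) (auto simp: finite_PiE case_prod_unfold)
  also have "\<dots> = (\<Sum>(a, b)\<in>Pi\<^sub>E I (\<lambda>_. UNIV) \<times> Pi\<^sub>E J (\<lambda>_. UNIV).
      measure_pmf.prob M {\<omega>. (\<forall>k\<in>I. X \<omega> k = a k) \<and> (\<forall>k\<in>J. Y \<omega> k = b k)} * F a b)"
    by (intro sum.cong refl) (auto simp: pmf_map fibre)
  finally show ?thesis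
    by (simp add: sum.cartesian_product)
qed

lemma expectation_path_functional:
  fixes M :: "'w pmf" and X Y :: "'w \<Rightarrow> nat \<Rightarrow> 'x::finite" and A Q :: "'x \<Rightarrow> 'x \<Rightarrow> real"
  assumes m: "1 \<le> m" and st: "stochastic A"
    and law: "\<forall>a b. measure_pmf.prob M {\<omega>. (\<forall>k<m. X \<omega> k = a k) \<and> (\<forall>k\<in>{m..m+N}. Y \<omega> k = b k)}
      = \<pi>0 (a 0) * (\<Prod>k<m - 1. A (a k) (a (Suc k))) * Q (a (m - 1)) (b m)
        * (\<Prod>k\<in>{m..<m+N}. A (b k) (b (Suc k)))"
  shows "measure_pmf.expectation M (\<lambda>\<omega>. g (X \<omega> (m - 1)) * (\<Sum>k\<in>{m..m+N}. c (Y \<omega> k)))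
    = dot (vecmat_pow \<pi>0 A (m - 1)) (\<lambda>i. g i * (\<Sum>n\<le>N. dot (vecmat_pow (Q i) A n) c))"
proof -
  have prefix: "{..<m} = {0..0 + (m - 1)}"
    using m by auto
  define F where "F a b = g (a (m - 1)) * (\<Sum>k\<in>{m..m+N}. c (b k))" for a b :: "nat \<Rightarrow> 'x"
  have "measure_pmf.expectation M (\<lambda>\<omega>. g (X \<omega> (m - 1)) * (\<Sum>k\<in>{m..m+N}. c (Y \<omega> k)))
      = measure_pmf.expectation M (\<lambda>\<omega>. F (restrict (X \<omega>) {..<m}) (restrict (Y \<omega>) {m..m+N}))"
    using m by (simp add: F_def)
  also have "\<dots> = (\<Sum>a\<in>Pi\<^sub>E {..<m} (\<lambda>_. UNIV). \<Sum>b\<in>Pi\<^sub>E {m..m+N} (\<lambda>_. UNIV).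
      measure_pmf.prob M {\<omega>. (\<forall>k\<in>{..<m}. X \<omega> k = a k) \<and> (\<forall>k\<in>{m..m+N}. Y \<omega> k = b k)} * F a b)"
    by (rule expectation_cylinders) simp_all
  also have "\<dots> = (\<Sum>a\<in>Pi\<^sub>E {..<m} (\<lambda>_. UNIV). \<Sum>b\<in>Pi\<^sub>E {m..m+N} (\<lambda>_. UNIV).
      path_weight \<pi>0 A 0 (m - 1) a * g (a (m - 1))
      * (path_weight (Q (a (m - 1))) A m N b * (\<Sum>k\<in>{m..m+N}. c (b k))))"
    using law by (simp add: F_def path_weight_def atLeast0LessThan Ball_def[of "{..<m}"] mult_ac)
  also have "\<dots> = (\<Sum>a\<in>Pi\<^sub>E {0..0 + (m - 1)} (\<lambda>_. UNIV). path_weight \<pi>0 A 0 (m - 1) a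
      * (\<lambda>i. g i * (\<Sum>n\<le>N. dot (vecmat_pow (Q i) A n) c)) (a (0 + (m - 1))))"
    by (simp add: prefix sum_distrib_left[symmetric] sum_paths_additive[OF st] mult.assoc)
  also have "\<dots> = dot (vecmat_pow \<pi>0 A (m - 1)) (\<lambda>i. g i * (\<Sum>n\<le>N. dot (vecmat_pow (Q i) A n) c))"
    by (rule sum_paths_endpoint)
  finally show ?thesis .
qed

lemma expectation_score_estimator:
  fixes M :: "((nat \<Rightarrow> 'x::finite) \<times> (nat \<Rightarrow> 'x) \<times> (nat \<Rightarrow> 'x)) pmf"
  assumes m: "1 \<le> m" and st: "stochastic A"
    and law1: "\<forall>a b. measure_pmf.prob M
          {\<omega>. (\<forall>k<m. fst \<omega> k = a k) \<and> (\<forall>k\<in>{m..m+N}. fst (snd \<omega>) k = b k)}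
        = \<pi>0 (a 0) * (\<Prod>k<m - 1. A (a k) (a (Suc k))) * Pd (a (m - 1)) (b m)
          * (\<Prod>k\<in>{m..<m+N}. A (b k) (b (Suc k)))"
    and law2: "\<forall>a b. measure_pmf.prob M
          {\<omega>. (\<forall>k<m. fst \<omega> k = a k) \<and> (\<forall>k\<in>{m..m+N}. snd (snd \<omega>) k = b k)}
        = \<pi>0 (a 0) * (\<Prod>k<m - 1. A (a k) (a (Suc k))) * Pdd (a (m - 1)) (b m)
          * (\<Prod>k\<in>{m..<m+N}. A (b k) (b (Suc k)))"
  shows "measure_pmf.expectation M
      (\<lambda>\<omega>. g (fst \<omega> (m - 1)) * (\<Sum>k\<in>{m..m+N}. c (fst (snd \<omega>) k) - c (snd (snd \<omega>) k)))
    = dot (vecmat_pow \<pi>0 A (m - 1))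
        (\<lambda>i. g i * (\<Sum>n\<le>N. dot (vecmat_pow (\<lambda>j. Pd i j - Pdd i j) A n) c))"
proof -
  have integrable: "integrable (measure_pmf M) (\<lambda>\<omega>. g (fst \<omega> (m - 1)) * (\<Sum>k\<in>{m..m+N}. c (Y \<omega> k)))"
    for Y :: "_ \<Rightarrow> nat \<Rightarrow> 'x"
  proof (rule measure_pmf.integrable_const_bound)
    show "AE \<omega> in measure_pmf M. norm (g (fst \<omega> (m - 1)) * (\<Sum>k\<in>{m..m+N}. c (Y \<omega> k)))
        \<le> norm1 g * (\<Sum>k\<in>{m..m+N}. norm1 c)"
      unfolding real_norm_def abs_mult
      by (intro AE_I2 mult_mono abs_le_norm1 order_trans[OF sum_abs] sum_mono) (simp_all add: norm1_nonneg)
  qed simp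
  have "measure_pmf.expectation M
      (\<lambda>\<omega>. g (fst \<omega> (m - 1)) * (\<Sum>k\<in>{m..m+N}. c (fst (snd \<omega>) k) - c (snd (snd \<omega>) k)))
    = measure_pmf.expectation M (\<lambda>\<omega>. g (fst \<omega> (m - 1)) * (\<Sum>k\<in>{m..m+N}. c (fst (snd \<omega>) k)))
      - measure_pmf.expectation M (\<lambda>\<omega>. g (fst \<omega> (m - 1)) * (\<Sum>k\<in>{m..m+N}. c (snd (snd \<omega>) k)))"
    unfolding sum_subtractf right_diff_distrib
    by (rule Bochner_Integration.integral_diff[OF integrable integrable])
  also have "\<dots> = dot (vecmat_pow \<pi>0 A (m - 1))
        (\<lambda>i. g i * (\<Sum>n\<le>N. dot (vecmat_pow (Pd i) A n) c) - g i * (\<Sum>n\<le>N. dot (vecmat_pow (Pdd i) A n) c))"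
    unfolding expectation_path_functional[OF m st law1] expectation_path_functional[OF m st law2]
    by (simp add: dot_def right_diff_distrib sum_subtractf)
  finally show ?thesis
    by (simp add: vecmat_pow_diff dot_diff_left sum_subtractf right_diff_distrib)
qed

lemma sum_dot_vecmat_pow_telescope:
  assumes st: "stochastic A" and poisson: "matvec A h = (\<lambda>j. h j - c j + \<kappa>)"
    and zero_sum: "(\<Sum>i\<in>UNIV. v i) = 0"
  shows "(\<Sum>n\<le>N. dot (vecmat_pow v A n) c) = dot v h - dot (vecmat_pow v A (Suc N)) h"
proof -
  have "dot (vecmat_pow v A n) c = dot (vecmat_pow v A n) h - dot (vecmat_pow v A (Suc n)) h" for n
  proof -
    have "dot (vecmat_pow v A (Suc n)) h
        = dot (vecmat_pow v A n) h - dot (vecmat_pow v A n) c + \<kappa> * (\<Sum>i\<in>UNIV. vecmat_pow v A n i)"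
      unfolding vecmat_pow.simps dot_vecmat poisson
      by (simp add: dot_def algebra_simps sum.distrib sum_subtractf sum_distrib_left)
    then show ?thesis
      using sum_vecmat_pow[OF st] zero_sum by simp
  qed
  then show ?thesis
    using sum_telescope[of "\<lambda>n. dot (vecmat_pow v A n) h" N] by (simp del: vecmat_pow.simps(2))
qed

text \<open>The initial law is pushed through only \<open>m - 1\<close> steps, hence the factor \<open>1 / dobrushin A\<close>.\<close>

lemma estimator_bias_le:
  fixes A d :: "'x::finite \<Rightarrow> 'x \<Rightarrow> real" and g :: "'x \<Rightarrow> real"
  assumes st: "stochastic A" and sta: "stationary A p" and pos: "0 < dobrushin A"
    and poisson: "matvec A h = (\<lambda>j. h j - c j + dot p c)"
    and d_sum: "\<And>i. (\<Sum>j\<in>UNIV. d i j) = 0" and d_norm: "\<And>i. norm1 (d i) \<le> 2"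
    and m: "1 \<le> m" and pv: "prob_vector \<pi>0"
  defines "T \<equiv> matvec (\<lambda>i j. g i * d i j) h"
  shows "\<bar>dot (vecmat_pow \<pi>0 A (m - 1)) (\<lambda>i. g i * (\<Sum>n\<le>N. dot (vecmat_pow (d i) A n) c)) - dot p T\<bar>
    \<le> 2 * norm1 T / dobrushin A * dobrushin A ^ m * var_dist \<pi>0 p
      + 2 * dobrushin A * norm1 g * norm1 h * dobrushin A ^ N"
proof -
  define \<rho> where "\<rho> = dobrushin A"
  define \<mu> where "\<mu> = vecmat_pow \<pi>0 A (m - 1)"
  define R where "R i = g i * dot (vecmat_pow (d i) A (Suc N)) h" for i
  have T_eq: "T i = g i * dot (d i) h" for i
    by (simp add: T_def matvec_def dot_def sum_distrib_left mult.assoc)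
  have telescope: "(\<lambda>i. g i * (\<Sum>n\<le>N. dot (vecmat_pow (d i) A n) c)) = (\<lambda>i. T i - R i)"
    by (simp add: sum_dot_vecmat_pow_telescope[OF st poisson d_sum] T_eq R_def right_diff_distrib)
  have split: "dot \<mu> (\<lambda>i. T i - R i) - dot p T = dot (vecmat_pow (\<lambda>j. \<pi>0 j - p j) A (m - 1)) T - dot \<mu> R"
    by (simp add: \<mu>_def vecmat_pow_diff vecmat_pow_stationary[OF sta] dot_diff_left)
      (simp add: dot_def right_diff_distrib sum_subtractf)
  have transient: "\<bar>dot (vecmat_pow (\<lambda>j. \<pi>0 j - p j) A (m - 1)) T\<bar>
      \<le> 2 * norm1 T / \<rho> * \<rho> ^ m * var_dist \<pi>0 p"
  proof -
    have "(\<Sum>j\<in>UNIV. \<pi>0 j - p j) = 0"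
      using pv sta by (simp add: stationary_def prob_vector_def sum_subtractf)
    then have "\<bar>dot (vecmat_pow (\<lambda>j. \<pi>0 j - p j) A (m - 1)) T\<bar>
        \<le> \<rho> ^ (m - 1) * norm1 (\<lambda>j. \<pi>0 j - p j) * norm1 T"
      unfolding \<rho>_def
      by (intro order_trans[OF abs_dot_le] mult_right_mono norm1_vecmat_pow_le[OF st] norm1_nonneg)
    also have "\<dots> = 2 * norm1 T / \<rho> * \<rho> ^ m * var_dist \<pi>0 p"
      using m pos by (cases m) (simp_all add: \<rho>_def norm1_def var_dist_def)
    finally show ?thesis .
  qed
  have truncation: "\<bar>dot \<mu> R\<bar> \<le> 2 * \<rho> * norm1 g * norm1 h * \<rho> ^ N"
  proof -
    have "\<bar>R i\<bar> \<le> \<bar>g i\<bar> * (2 * \<rho> * norm1 h * \<rho> ^ N)" for i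
    proof -
      have "\<bar>dot (vecmat_pow (d i) A (Suc N)) h\<bar> \<le> \<rho> ^ Suc N * norm1 (d i) * norm1 h"
        unfolding \<rho>_def
        by (intro order_trans[OF abs_dot_le] mult_right_mono norm1_vecmat_pow_le[OF st d_sum] norm1_nonneg)
      also have "\<dots> \<le> \<rho> ^ Suc N * 2 * norm1 h"
        using pos by (intro mult_right_mono mult_left_mono d_norm norm1_nonneg) (simp_all add: \<rho>_def)
      finally show ?thesis
        unfolding R_def abs_mult by (intro mult_left_mono) (simp_all add: mult_ac)
    qed
    then have "norm1 R \<le> norm1 g * (2 * \<rho> * norm1 h * \<rho> ^ N)"
      unfolding norm1_def by (simp add: sum_distrib_right sum_mono)
    moreover have "norm1 \<mu> = 1"
      by (simp add: \<mu>_def norm1_prob_vector prob_vector_vecmat_pow[OF st pv])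
    ultimately show ?thesis
      using abs_dot_le[of \<mu> R] by (simp add: mult_ac)
  qed
  have "\<bar>dot \<mu> (\<lambda>i. T i - R i) - dot p T\<bar>
      \<le> \<bar>dot (vecmat_pow (\<lambda>j. \<pi>0 j - p j) A (m - 1)) T\<bar> + \<bar>dot \<mu> R\<bar>"
    unfolding split by (rule abs_triangle_ineq4)
  with transient truncation show ?thesis
    unfolding telescope \<mu>_def \<rho>_def by linarith
qed

theorem theorem2p3:
  fixes U :: "real set" and \<theta> :: real
    and P :: "real \<Rightarrow> 'x::finite \<Rightarrow> 'x \<Rightarrow> real"
    and \<pi> :: "real \<Rightarrow> 'x \<Rightarrow> real"
    and Pd Pdd :: "'x \<Rightarrow> 'x \<Rightarrow> real"
    and g c :: "'x \<Rightarrow> real"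
  assumes "open U" and "\<theta> \<in> U"
    and "\<forall>t\<in>U. stochastic (P t) \<and> regular (P t)"
    and "\<forall>t\<in>U. \<forall>i j. (\<lambda>s. P s i j) differentiable (at t)"
    and "\<forall>t\<in>U. stationary (P t) (\<pi> t)"
    and "0 < dobrushin (P \<theta>)" and "dobrushin (P \<theta>) < 1"
    and "stochastic Pd" and "stochastic Pdd"
    and "\<forall>i j. ((\<lambda>s. P s i j) has_real_derivative (g i * (Pd i j - Pdd i j))) (at \<theta>)"
  shows "\<exists>D K1 K2. ((\<lambda>t. \<Sum>i\<in>UNIV. c i * \<pi> t i) has_real_derivative D) (at \<theta>) \<and>
    (\<forall>(m::nat) (N::nat) (\<pi>0 :: 'x \<Rightarrow> real)
       (M :: ((nat \<Rightarrow> 'x) \<times> (nat \<Rightarrow> 'x) \<times> (nat \<Rightarrow> 'x)) pmf).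
      1 \<le> m \<longrightarrow> prob_vector \<pi>0 \<longrightarrow>
      (\<forall>a b. measure_pmf.prob M
          {\<omega>. (\<forall>k<m. fst \<omega> k = a k) \<and> (\<forall>k\<in>{m..m+N}. fst (snd \<omega>) k = b k)}
        = \<pi>0 (a 0) * (\<Prod>k<m - 1. P \<theta> (a k) (a (Suc k))) * Pd (a (m - 1)) (b m)
          * (\<Prod>k\<in>{m..<m+N}. P \<theta> (b k) (b (Suc k)))) \<longrightarrow>
      (\<forall>a b. measure_pmf.prob M
          {\<omega>. (\<forall>k<m. fst \<omega> k = a k) \<and> (\<forall>k\<in>{m..m+N}. snd (snd \<omega>) k = b k)}
        = \<pi>0 (a 0) * (\<Prod>k<m - 1. P \<theta> (a k) (a (Suc k))) * Pdd (a (m - 1)) (b m)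
          * (\<Prod>k\<in>{m..<m+N}. P \<theta> (b k) (b (Suc k)))) \<longrightarrow>
      \<bar>measure_pmf.expectation M
          (\<lambda>\<omega>. g (fst \<omega> (m - 1)) *
             (\<Sum>k\<in>{m..m+N}. c (fst (snd \<omega>) k) - c (snd (snd \<omega>) k))) - D\<bar>
        \<le> K1 * dobrushin (P \<theta>) ^ m * var_dist \<pi>0 (\<pi> \<theta>) + K2 * dobrushin (P \<theta>) ^ N)"
proof -
  have st: "stochastic (P \<theta>)" and sta: "stationary (P \<theta>) (\<pi> \<theta>)"
    using assms(2,3,5) by auto
  obtain h where poisson: "matvec (P \<theta>) h = (\<lambda>j. h j - c j + dot (\<pi> \<theta>) c)"
    using poisson_equation_solvable[OF st sta assms(7)] by blast
  define d where "d i = (\<lambda>j. Pd i j - Pdd i j)" for i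
  define T where "T = matvec (\<lambda>i j. g i * d i j) h"
  have near: "\<forall>\<^sub>F t in at \<theta>. stationary (P t) (\<pi> t)"
    using eventually_at_in_open'[OF assms(1,2)] assms(5) by (auto elim: eventually_mono)
  have deriv: "((\<lambda>t. \<Sum>i\<in>UNIV. c i * \<pi> t i) has_real_derivative dot (\<pi> \<theta>) T) (at \<theta>)"
    unfolding T_def using assms(10)
    by (intro stationary_functional_has_derivative[OF near sta assms(7) _ poisson]) (simp add: d_def)
  have d_sum: "(\<Sum>j\<in>UNIV. d i j) = 0" and d_norm: "norm1 (d i) \<le> 2" for i
    using assms(8,9) norm1_diff_le[of "Pd i" "Pdd i"]
    by (simp_all add: d_def stochastic_def prob_vector_def sum_subtractf norm1_prob_vector)
  define K1 K2 where "K1 = 2 * norm1 T / dobrushin (P \<theta>)"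
    and "K2 = 2 * dobrushin (P \<theta>) * norm1 g * norm1 h"
  have bias: "\<bar>dot (vecmat_pow \<pi>0 (P \<theta>) (m - 1)) (\<lambda>i. g i * (\<Sum>n\<le>N. dot (vecmat_pow (d i) (P \<theta>) n) c))
      - dot (\<pi> \<theta>) T\<bar> \<le> K1 * dobrushin (P \<theta>) ^ m * var_dist \<pi>0 (\<pi> \<theta>) + K2 * dobrushin (P \<theta>) ^ N"
    if "1 \<le> m" "prob_vector \<pi>0" for m N \<pi>0
    unfolding K1_def K2_def T_def
    by (rule estimator_bias_le[OF st sta assms(6) poisson d_sum d_norm that])
  show ?thesis
    by (rule exI[of _ "dot (\<pi> \<theta>) T"], rule exI[of _ K1], rule exI[of _ K2], intro conjI deriv allI impI)
      (subst expectation_score_estimator[OF _ st], assumption+, use bias in \<open>simp add: d_def\<close>)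
qed

end
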